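(* For every integer $n\ge1$ and every $\lambda<0$, $$G_{n,n+1}(\lambda):=\frac{\frac{d}{d\lambda}h^{(1)}_{n+1}(-i\lambda)}{h^{(1)}_{n+1}(-i\lambda)}-\frac{\frac{d}{d\lambda}h^{(1)}_{n}(-i\lambda)}{h^{(1)}_{n}(-i\lambda)}>0.$$
   Context: For $n\ge0$ let $R_n(w)=\sum_{m=0}^n\frac{(n+m)!}{m!\,(n-m)!}w^m$. The spherical Hankel function of the first kind satisfies, for real $\lambda<0$, $h^{(1)}_n(-i\lambda)=(-i)^n\frac{e^{\lambda}}{\lambda}R_n\!\left(-\frac{1}{2\lambda}\right)$ (up to an $n$-independent normalizing constant, which does not affect the logarithmic derivatives); $\frac{d}{d\lambda}h^{(1)}_n(-i\lambda)$ denotes the derivative of the function $\lambda\mapsto h^{(1)}_n(-i\lambda)$. *)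

theory Defs
  imports "HOL-Analysis.Analysis"
begin

definition R :: "nat \<Rightarrow> real \<Rightarrow> real" where
  "R n w = (\<Sum>m = 0..n. (fact (n + m) / (fact m * fact (n - m))) * w ^ m)"

text \<open>The function lam |-> h^(1)_n(-i lam) for real lam < 0, given by the closed form
  (-i)^n e^lam / lam * R_n(-1/(2 lam)) (normalizing constant dropped).\<close>
definition hankel1_neg_i :: "nat \<Rightarrow> real \<Rightarrow> complex" where
  "hankel1_neg_i n lam = (- \<i>) ^ n * complex_of_real (exp lam / lam * R n (- 1 / (2 * lam)))"

definition G :: "nat \<Rightarrow> real \<Rightarrow> complex" where
  "G n lam =
     vector_derivative (hankel1_neg_i (n + 1)) (at lam) / hankel1_neg_i (n + 1) lam
   - vector_derivative (hankel1_neg_i n) (at lam) / hankel1_neg_i n lam"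

end

(*
  The polynomials R_n satisfy the three-term recurrence
  R_(n+2)(w) = 2(2n+3) w R_(n+1)(w) + R_n(w) of the spherical Bessel functions.
  With w = -1/(2 lam) > 0, the difference of logarithmic derivatives equals
  W_n(w) / (2 lam^2 R_n(w) R_(n+1)(w)), where W_n = R_(n+1)' R_n - R_n' R_(n+1).
  The recurrence gives W_0 = 2 and W_(n+1) = 2(2n+3) R_(n+1)^2 - W_n, so
  W_(n+2) - W_n = 2(2n+5) R_(n+2)^2 - 2(2n+3) R_(n+1)^2 > 0, because for w >= 0
  the coefficients of R_n, and hence the values R_n(w) >= 1, increase with n.
*)
theory Submission
  imports Defs
begin

text \<open>Coefficients are set to zero above degree \<open>n\<close>, so that \<open>R n\<close> is a sum over any
  range \<open>{..<N}\<close> with \<open>n < N\<close> and the coefficient recurrence needs no boundary cases.\<close>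

definition R_coeff :: "nat \<Rightarrow> nat \<Rightarrow> real" where
  "R_coeff n m = (if m \<le> n then fact (n + m) / (fact m * fact (n - m)) else 0)"

lemma R_coeff_0 [simp]: "R_coeff n 0 = 1"
  by (simp add: R_coeff_def)

lemma R_coeff_nonneg: "R_coeff n m \<ge> 0"
  by (simp add: R_coeff_def)

lemma R_eq_sum:
  assumes "n < N"
  shows "R n w = (\<Sum>m<N. R_coeff n m * w ^ m)"
proof -
  have "(\<Sum>m<N. R_coeff n m * w ^ m) = (\<Sum>m\<in>{0..n}. R_coeff n m * w ^ m)"
    using assms by (intro sum.mono_neutral_right) (auto simp: R_coeff_def)
  then show ?thesis
    by (simp add: R_def R_coeff_def)
qed

lemma R_coeff_rec:
  assumes "k \<le> Suc n"
  shows "R_coeff (Suc (Suc n)) (Suc k) = 2 * (2 * real n + 3) * R_coeff (Suc n) k + R_coeff n (Suc k)"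
proof -
  define j where "j = Suc n - k"
  have nkj: "Suc n = k + j"
    using assms by (simp add: j_def)
  \<comment> \<open>All three coefficients are multiples of \<open>F\<close>; the factor \<open>j (j - 1)\<close> of the last
    one vanishes exactly when \<open>Suc k > n\<close>.\<close>
  define a where "a = 2 * k + j"
  define F :: real where "F = fact a / (fact (Suc k) * fact j)"
  have top: "R_coeff (Suc (Suc n)) (Suc k) = (a + 2) * (a + 1) * F"
  proof -
    have "Suc (Suc n) + Suc k = Suc (Suc a)" "Suc (Suc n) - Suc k = j"
      using nkj by (auto simp: a_def)
    then show ?thesis
      using assms by (simp add: R_coeff_def F_def algebra_simps)
  qed
  have mid: "R_coeff (Suc n) k = (k + 1) * F"
  proof -
    have "Suc n + k = a" "Suc n - k = j"
      using nkj by (auto simp: a_def)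
    then show ?thesis
      using assms by (simp add: R_coeff_def F_def fact_Suc[of k] del: fact_Suc)
  qed
  have low: "R_coeff n (Suc k) = j * (real j - 1) * F"
  proof (cases "j \<ge> 2")
    case True
    then obtain i where i: "j = Suc (Suc i)"
      using add_2_eq_Suc le_Suc_ex by blast
    have "n + Suc k = a" "n - Suc k = i"
      using nkj i by (auto simp: a_def)
    moreover have "fact j = real j * (real j - 1) * fact i" "real j * (real j - 1) \<noteq> 0"
      using i by (simp add: algebra_simps, simp)
    ultimately show ?thesis
      using nkj by (simp add: R_coeff_def F_def del: fact_Suc)
  next
    case False
    then have "j = 0 \<or> j = 1" by auto
    moreover have "\<not> Suc k \<le> n"
      using nkj False by auto
    ultimately show ?thesis
      by (auto simp: R_coeff_def)
  qed
  have "real n = real k + real j - 1" "real a = 2 * real k + real j"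
    using nkj by (simp_all add: a_def)
  then show ?thesis
    unfolding top mid low by (simp only:) (simp add: algebra_simps)
qed

lemma R_rec: "R (Suc (Suc n)) w = 2 * (2 * real n + 3) * w * R (Suc n) w + R n w"
proof -
  let ?c = "2 * (2 * real n + 3)"
  have shift: "(\<Sum>m<Suc (Suc (Suc n)). f m) = f 0 + (\<Sum>k<Suc (Suc n). f (Suc k))" for f :: "nat \<Rightarrow> real"
    by (rule sum.lessThan_Suc_shift)
  have "R (Suc (Suc n)) w = 1 + (\<Sum>k<Suc (Suc n). R_coeff (Suc (Suc n)) (Suc k) * w ^ Suc k)"
    using R_eq_sum[of "Suc (Suc n)" "Suc (Suc (Suc n))" w] by (simp only: shift) simp
  also have "\<dots> = ?c * w * (\<Sum>k<Suc (Suc n). R_coeff (Suc n) k * w ^ k)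
                     + (1 + (\<Sum>k<Suc (Suc n). R_coeff n (Suc k) * w ^ Suc k))"
    by (simp add: R_coeff_rec sum.distrib sum_distrib_left algebra_simps del: sum.lessThan_Suc)
  also have "(\<Sum>k<Suc (Suc n). R_coeff (Suc n) k * w ^ k) = R (Suc n) w"
    by (rule R_eq_sum[symmetric]) simp
  also have "1 + (\<Sum>k<Suc (Suc n). R_coeff n (Suc k) * w ^ Suc k) = R n w"
    using R_eq_sum[of n "Suc (Suc (Suc n))" w] by (simp only: shift) simp
  finally show ?thesis
    by simp
qed

lemma R_has_deriv: "(R n has_real_derivative deriv (R n) w) (at w)"
proof -
  have "R n = (\<lambda>w. \<Sum>m<Suc n. R_coeff n m * w ^ m)"
    using R_eq_sum[of n "Suc n"] by auto
  then have "R n differentiable at w"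
    by (simp del: sum.lessThan_Suc)
  then show ?thesis
    using DERIV_deriv_iff_real_differentiable by blast
qed

lemma R_has_deriv_chain [derivative_intros]:
  "(g has_real_derivative g') (at x) \<Longrightarrow>
    ((\<lambda>x. R n (g x)) has_real_derivative deriv (R n) (g x) * g') (at x)"
  by (rule DERIV_chain2[OF R_has_deriv])

lemma deriv_R_rec:
  "deriv (R (Suc (Suc n))) w
     = 2 * (2 * real n + 3) * (R (Suc n) w + w * deriv (R (Suc n)) w) + deriv (R n) w"
proof -
  have "R (Suc (Suc n)) = (\<lambda>w. 2 * (2 * real n + 3) * w * R (Suc n) w + R n w)"
    by (simp add: R_rec fun_eq_iff)
  then have "(R (Suc (Suc n)) has_real_derivative
      2 * (2 * real n + 3) * (R (Suc n) w + w * deriv (R (Suc n)) w) + deriv (R n) w) (at w)"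
    by (auto intro!: derivative_eq_intros R_has_deriv simp: algebra_simps)
  then show ?thesis
    by (rule DERIV_imp_deriv)
qed

definition R_wronskian :: "nat \<Rightarrow> real \<Rightarrow> real" where
  "R_wronskian n w = deriv (R (Suc n)) w * R n w - deriv (R n) w * R (Suc n) w"

lemma R_wronskian_0: "R_wronskian 0 w = 2"
proof -
  have "R 0 = (\<lambda>_. 1)" "R 1 = (\<lambda>w. 1 + 2 * w)"
    by (simp_all add: fun_eq_iff R_def)
  moreover have "deriv (\<lambda>w. 1 + 2 * w) w = (2 :: real)"
    by (rule DERIV_imp_deriv) (auto intro!: derivative_eq_intros)
  ultimately show ?thesis
    by (simp add: R_wronskian_def)
qed

lemma R_wronskian_Suc:
  "R_wronskian (Suc n) w = 2 * (2 * real n + 3) * (R (Suc n) w)\<^sup>2 - R_wronskian n w"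
  unfolding R_wronskian_def deriv_R_rec R_rec by (simp add: algebra_simps power2_eq_square)

lemma R_ge_1: "w \<ge> 0 \<Longrightarrow> R n w \<ge> 1"
  using R_eq_sum[of n "Suc n" w]
  by (simp add: sum.lessThan_Suc_shift R_coeff_nonneg sum_nonneg del: sum.lessThan_Suc)

lemma R_coeff_mono: "R_coeff n m \<le> R_coeff (Suc n) m"
proof (cases "m \<le> n")
  case True
  then have "Suc n + m = Suc (n + m)" "Suc n - m = Suc (n - m)"
    by auto
  moreover have "real (n - m) + 1 \<le> real (n + m) + 1"
    by simp
  ultimately show ?thesis
    using True by (simp add: R_coeff_def divide_simps mult_left_mono mult_right_mono)
qed (simp add: R_coeff_def)

lemma R_mono:
  assumes "w \<ge> 0"
  shows "R n w \<le> R (Suc n) w"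
proof -
  have "(\<Sum>m<Suc (Suc n). R_coeff n m * w ^ m) \<le> (\<Sum>m<Suc (Suc n). R_coeff (Suc n) m * w ^ m)"
    using assms by (intro sum_mono mult_right_mono R_coeff_mono) auto
  then show ?thesis
    using R_eq_sum[of n "Suc (Suc n)" w] R_eq_sum[of "Suc n" "Suc (Suc n)" w]
    by (simp del: sum.lessThan_Suc)
qed

lemma R_wronskian_pos:
  assumes "w \<ge> 0"
  shows "R_wronskian n w > 0"
proof (induction n rule: nat_induct2)
  case 0
  then show ?case
    by (simp add: R_wronskian_0)
next
  case 1
  have "1 \<le> (R 1 w)\<^sup>2"
    using R_ge_1[OF assms] by (simp add: one_le_power)
  then show ?case
    using R_wronskian_Suc[of 0 w] by (simp add: R_wronskian_0)
next
  case (step n)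
  have "(R (Suc n) w)\<^sup>2 \<le> (R (Suc (Suc n)) w)\<^sup>2"
    using R_mono[OF assms, of "Suc n"] R_ge_1[OF assms, of "Suc n"] by (intro power_mono) auto
  then have "2 * (2 * real n + 3) * (R (Suc n) w)\<^sup>2
             \<le> 2 * (2 * real (Suc n) + 3) * (R (Suc (Suc n)) w)\<^sup>2"
    by (intro mult_mono) auto
  then show ?case
    using step R_wronskian_Suc[of "Suc n" w] R_wronskian_Suc[of n w] by simp
qed

definition hankel_profile :: "nat \<Rightarrow> real \<Rightarrow> real" where
  "hankel_profile n x = exp x / x * R n (- 1 / (2 * x))"

definition hankel_log_deriv :: "nat \<Rightarrow> real \<Rightarrow> real" where
  "hankel_log_deriv n x =
     1 - 1 / x + deriv (R n) (- 1 / (2 * x)) / (2 * x\<^sup>2 * R n (- 1 / (2 * x)))"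

lemma R_ge_1_at_neg: "x < 0 \<Longrightarrow> R n (- 1 / (2 * x)) \<ge> 1"
  by (rule R_ge_1) (simp add: divide_simps)

lemma hankel_profile_has_deriv:
  assumes "x < 0"
  shows "(hankel_profile n has_real_derivative hankel_profile n x * hankel_log_deriv n x) (at x)"
proof -
  have "R n (- 1 / (2 * x)) \<noteq> 0"
    using R_ge_1_at_neg[OF assms, of n] by linarith
  then show ?thesis
    unfolding hankel_profile_def[abs_def] hankel_log_deriv_def
    using assms by (auto intro!: derivative_eq_intros simp: field_simps power2_eq_square)
qed

lemma hankel1_neg_i_eq: "hankel1_neg_i n x = (- \<i>) ^ n * complex_of_real (hankel_profile n x)"
  by (simp add: hankel1_neg_i_def hankel_profile_def)

lemma hankel1_neg_i_nonzero: "x < 0 \<Longrightarrow> hankel1_neg_i n x \<noteq> 0"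
  using R_ge_1_at_neg[of x n] by (auto simp: hankel1_neg_i_eq hankel_profile_def)

lemma vector_derivative_hankel1_neg_i:
  assumes "x < 0"
  shows "vector_derivative (hankel1_neg_i n) (at x)
           = hankel1_neg_i n x * complex_of_real (hankel_log_deriv n x)"
proof -
  have "(hankel1_neg_i n has_vector_derivative
          (- \<i>) ^ n * complex_of_real (hankel_profile n x * hankel_log_deriv n x)) (at x)"
    unfolding hankel1_neg_i_eq[abs_def]
    by (intro has_vector_derivative_mult_right has_vector_derivative_of_real
          hankel_profile_has_deriv assms)
  then show ?thesis
    by (simp add: vector_derivative_at hankel1_neg_i_eq)
qed

lemma G_eq_log_deriv_diff:
  "x < 0 \<Longrightarrow> G n x = complex_of_real (hankel_log_deriv (Suc n) x - hankel_log_deriv n x)"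
  by (simp add: G_def vector_derivative_hankel1_neg_i hankel1_neg_i_nonzero)

lemma hankel_log_deriv_diff:
  assumes "x < 0"
  defines "w \<equiv> - 1 / (2 * x)"
  shows "hankel_log_deriv (Suc n) x - hankel_log_deriv n x
           = R_wronskian n w / (2 * x\<^sup>2 * R n w * R (Suc n) w)"
proof -
  have "R n w \<noteq> 0" "R (Suc n) w \<noteq> 0"
    using R_ge_1_at_neg[OF assms(1)] unfolding w_def by (metis not_one_le_zero)+
  then show ?thesis
    using assms(1) unfolding hankel_log_deriv_def R_wronskian_def w_def[symmetric]
    by (simp add: field_simps)
qed

theorem proposition3p1:
  fixes n :: nat and lam :: real
  assumes "n \<ge> 1" and "lam < 0"
  shows "G n lam \<in> \<real> \<and> Re (G n lam) > 0"
proof -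
  define w where "w = - 1 / (2 * lam)"
  have "w \<ge> 0"
    using assms(2) by (simp add: w_def divide_simps)
  then have "R_wronskian n w / (2 * lam\<^sup>2 * R n w * R (Suc n) w) > 0"
    using R_wronskian_pos R_ge_1[of w n] R_ge_1[of w "Suc n"] assms(2)
    by (intro divide_pos_pos mult_pos_pos) auto
  moreover have "G n lam = complex_of_real (R_wronskian n w / (2 * lam\<^sup>2 * R n w * R (Suc n) w))"
    using assms(2) by (simp add: G_eq_log_deriv_diff hankel_log_deriv_diff w_def)
  ultimately show ?thesis
    by simp
qed

end
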